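(* Let $(X,G)$ be a minimal continuous action and $m\in\mathbb{N}$, $m\geq 2$. If $(x_1,\dots,x_m)\in Q_m(X,G)$ and $U_1\times\cdots\times U_m$ is an open product neighborhood of $(x_1,\dots,x_m)$ in $X^m$, then $$\bigcap_{i=1}^m N(U_1,U_i)\neq\emptyset.$$
   Context: $G$ is a locally compact topological group acting continuously on a compact metric space $(X,d)$; minimal means every orbit is dense. A tuple $(x_1,\dots,x_m)\in X^m$ is $m$-regionally proximal if for each $\varepsilon>0$ there exist $x_1',\dots,x_m'\in X$ with $d(x_i,x_i')<\varepsilon$ for all $i$, and $g\in G$ with $d(gx_i',gx_j')<\varepsilon$ for all $i,j$; $Q_m(X,G)$ is the set of such tuples. For nonempty open $U,V\subset X$, $N(U,V)=\{g\in G: U\cap gV\neq\emptyset\}$. *)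

theory Defs
  imports "HOL-Analysis.Analysis"
begin

text \<open>A continuous action of a topological group (written additively, class
  topological_group_add; not necessarily commutative) on a compact subset X
  of a metric space.\<close>
definition continuous_action ::
  "('g::topological_group_add \<Rightarrow> 'a::metric_space \<Rightarrow> 'a) \<Rightarrow> 'a set \<Rightarrow> bool" where
  "continuous_action act X \<longleftrightarrow>
     (\<forall>g. \<forall>x\<in>X. act g x \<in> X) \<and>
     (\<forall>x\<in>X. act 0 x = x) \<and>
     (\<forall>g h. \<forall>x\<in>X. act (g + h) x = act g (act h x)) \<and>
     continuous_on (UNIV \<times> X) (\<lambda>(g, x). act g x)"

definition minimal_action ::
  "('g::topological_group_add \<Rightarrow> 'a::metric_space \<Rightarrow> 'a) \<Rightarrow> 'a set \<Rightarrow> bool" where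
  "minimal_action act X \<longleftrightarrow> (\<forall>x\<in>X. closure (range (\<lambda>g. act g x)) = X)"

definition Q_reg ::
  "nat \<Rightarrow> ('g \<Rightarrow> 'a::metric_space \<Rightarrow> 'a) \<Rightarrow> 'a set \<Rightarrow> (nat \<Rightarrow> 'a) set" where
  "Q_reg m act X = {x. (\<forall>i\<in>{1..m}. x i \<in> X) \<and>
     (\<forall>\<epsilon>>0. \<exists>x'. (\<forall>i\<in>{1..m}. x' i \<in> X \<and> dist (x i) (x' i) < \<epsilon>) \<and>
        (\<exists>g. \<forall>i\<in>{1..m}. \<forall>j\<in>{1..m}. dist (act g (x' i)) (act g (x' j)) < \<epsilon>))}"

definition N_set :: "('g \<Rightarrow> 'a \<Rightarrow> 'a) \<Rightarrow> 'a set \<Rightarrow> 'a set \<Rightarrow> 'g set" where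
  "N_set act U V = {g. U \<inter> act g ` V \<noteq> {}}"

end

theory Submission
  imports Defs
begin

text \<open>By minimality the translates of the open set \<open>U 1\<close> under the inverse action cover the
  compact space \<open>X\<close>; let \<open>e\<close> be a Lebesgue number of this cover. Regional proximality gives
  points \<open>x' i \<in> U i\<close> and a group element \<open>g\<close> such that all \<open>g x' i\<close> lie in a ball of radius \<open>e\<close>,
  hence in a single translate \<open>k\<^sup>-\<^sup>1 U 1\<close>. Then \<open>k g\<close> maps every \<open>x' i\<close> into \<open>U 1\<close>,
  i.e. \<open>k g \<in> N(U 1, U i)\<close> for all \<open>i\<close>.\<close>

lemma Lebesgue_number_openin:
  fixes S :: "'a::metric_space set"
  assumes "compact S" "S \<subseteq> \<Union>\<C>" "\<And>C. C \<in> \<C> \<Longrightarrow> openin (top_of_set S) C"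
  obtains e where "e > 0" "\<And>x. x \<in> S \<Longrightarrow> \<exists>C\<in>\<C>. S \<inter> ball x e \<subseteq> C"
proof -
  have "\<forall>C\<in>\<C>. \<exists>T. open T \<and> C = S \<inter> T"
    using assms(3) by (simp add: openin_open)
  then obtain T where T: "\<And>C. C \<in> \<C> \<Longrightarrow> open (T C) \<and> C = S \<inter> T C"
    by metis
  have "S \<subseteq> \<Union>(T ` \<C>)"
    using assms(2) T by blast
  then obtain e where "e > 0" and e: "\<And>x. x \<in> S \<Longrightarrow> \<exists>B\<in>T ` \<C>. ball x e \<subseteq> B"
    using Heine_Borel_lemma[OF assms(1)] T by (metis imageE)
  have "\<exists>C\<in>\<C>. S \<inter> ball x e \<subseteq> C" if "x \<in> S" for x
    using e[OF that] T by blast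
  with \<open>e > 0\<close> show thesis
    using that by blast
qed

lemma finite_uniform_radius:
  fixes x :: "'i \<Rightarrow> 'a::metric_space"
  assumes "finite I" "\<And>i. i \<in> I \<Longrightarrow> openin (top_of_set S) (U i) \<and> x i \<in> U i"
  obtains r where "r > 0" "\<And>i y. i \<in> I \<Longrightarrow> y \<in> S \<Longrightarrow> dist y (x i) < r \<Longrightarrow> y \<in> U i"
proof -
  have "eventually (\<lambda>r. \<forall>y\<in>S. dist y (x i) < r \<longrightarrow> y \<in> U i) (at_right 0)" if i: "i \<in> I" for i
  proof -
    obtain r where "r > 0" "\<forall>y\<in>S. dist y (x i) < r \<longrightarrow> y \<in> U i"
      using assms(2)[OF i] unfolding openin_euclidean_subtopology_iff by blast
    then show ?thesis
      unfolding eventually_at_right_field by (meson less_le_trans less_le)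
  qed
  then have "eventually (\<lambda>r. r > 0 \<and> (\<forall>i\<in>I. \<forall>y\<in>S. dist y (x i) < r \<longrightarrow> y \<in> U i)) (at_right 0)"
    by (intro eventually_conj eventually_at_right_less eventually_ball_finite assms(1)) auto
  then obtain r where "r > 0" "\<forall>i\<in>I. \<forall>y\<in>S. dist y (x i) < r \<longrightarrow> y \<in> U i"
    using eventually_happens trivial_limit_at_right_real by blast
  then show thesis
    using that by blast
qed

lemma continuous_action_closed:
  "continuous_action act X \<Longrightarrow> y \<in> X \<Longrightarrow> act g y \<in> X"
  by (simp add: continuous_action_def)

lemma continuous_action_add:
  "continuous_action act X \<Longrightarrow> y \<in> X \<Longrightarrow> act (g + h) y = act g (act h y)"
  by (simp add: continuous_action_def)

lemma continuous_action_continuous_on: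
  assumes "continuous_action act X"
  shows "continuous_on X (act g)"
proof -
  have "continuous_on (UNIV \<times> X) (\<lambda>(g, y). act g y)"
    using assms by (simp add: continuous_action_def)
  then have "continuous_on X ((\<lambda>(g, y). act g y) \<circ> Pair g)"
    by (rule continuous_on_compose[rotated, OF continuous_on_subset]) (auto intro: continuous_intros)
  then show ?thesis
    by (simp add: o_def)
qed

lemma minimal_action_translates_cover:
  assumes "continuous_action act X" "minimal_action act X"
    and "openin (top_of_set X) V" "V \<noteq> {}"
  shows "X \<subseteq> (\<Union>k. X \<inter> act k -` V)"
proof
  fix y assume "y \<in> X"
  obtain T where T: "open T" "V = X \<inter> T"
    using assms(3) by (auto simp: openin_open)
  have "closure (range (\<lambda>g. act g y)) = X"
    using assms(2) \<open>y \<in> X\<close> by (simp add: minimal_action_def)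
  with T assms(4) have "T \<inter> range (\<lambda>g. act g y) \<noteq> {}"
    using open_Int_closure_eq_empty by blast
  then obtain k where "act k y \<in> T"
    by blast
  with T \<open>y \<in> X\<close> continuous_action_closed[OF assms(1)] show "y \<in> (\<Union>k. X \<inter> act k -` V)"
    by blast
qed

lemma minimal_action_Lebesgue_number:
  assumes "compact X" "continuous_action act X" "minimal_action act X"
    and "openin (top_of_set X) V" "V \<noteq> {}"
  obtains e where "e > 0" "\<And>z. z \<in> X \<Longrightarrow> \<exists>k. \<forall>y\<in>X. dist z y < e \<longrightarrow> act k y \<in> V"
proof -
  have "openin (top_of_set X) (X \<inter> act k -` V)" for k
  proof (rule continuous_openin_preimage[OF continuous_action_continuous_on[OF assms(2)] _ assms(4)])
    show "act k \<in> X \<rightarrow> X"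
      using continuous_action_closed[OF assms(2)] by blast
  qed
  then obtain e where "e > 0"
    and e: "\<And>z. z \<in> X \<Longrightarrow> \<exists>C\<in>range (\<lambda>k. X \<inter> act k -` V). X \<inter> ball z e \<subseteq> C"
    using Lebesgue_number_openin[OF assms(1) minimal_action_translates_cover[OF assms(2-5)]]
    by (metis (no_types, lifting) imageE)
  have "\<exists>k. \<forall>y\<in>X. dist z y < e \<longrightarrow> act k y \<in> V" if z: "z \<in> X" for z
  proof -
    obtain k where "X \<inter> ball z e \<subseteq> X \<inter> act k -` V"
      using e[OF z] by blast
    then show ?thesis
      by (auto simp: subset_iff)
  qed
  with \<open>e > 0\<close> show thesis
    using that by blast
qed

lemma Q_reg_in_neighbourhoods:
  assumes "x \<in> Q_reg m act X" "\<And>i. i \<in> {1..m} \<Longrightarrow> openin (top_of_set X) (U i) \<and> x i \<in> U i"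
    and "e > 0"
  obtains x' g where "\<And>i. i \<in> {1..m} \<Longrightarrow> x' i \<in> U i"
    and "\<And>i j. i \<in> {1..m} \<Longrightarrow> j \<in> {1..m} \<Longrightarrow> dist (act g (x' i)) (act g (x' j)) < e"
proof -
  obtain r where "r > 0" and r: "\<And>i y. i \<in> {1..m} \<Longrightarrow> y \<in> X \<Longrightarrow> dist y (x i) < r \<Longrightarrow> y \<in> U i"
    using finite_uniform_radius[of "{1..m}" X U x] assms(2) by blast
  have "\<forall>\<epsilon>>0. \<exists>x'. (\<forall>i\<in>{1..m}. x' i \<in> X \<and> dist (x i) (x' i) < \<epsilon>) \<and>
      (\<exists>g. \<forall>i\<in>{1..m}. \<forall>j\<in>{1..m}. dist (act g (x' i)) (act g (x' j)) < \<epsilon>)"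
    using assms(1) unfolding Q_reg_def by blast
  moreover have "min e r > 0"
    using \<open>e > 0\<close> \<open>r > 0\<close> by simp
  ultimately obtain x' g where x': "\<And>i. i \<in> {1..m} \<Longrightarrow> x' i \<in> X \<and> dist (x i) (x' i) < min e r"
    and close: "\<And>i j. i \<in> {1..m} \<Longrightarrow> j \<in> {1..m} \<Longrightarrow> dist (act g (x' i)) (act g (x' j)) < min e r"
    by blast
  have "x' i \<in> U i" if "i \<in> {1..m}" for i
    using r[OF that] x'[OF that] by (simp add: dist_commute)
  moreover have "dist (act g (x' i)) (act g (x' j)) < e" if "i \<in> {1..m}" "j \<in> {1..m}" for i j
    using close[OF that] by simp
  ultimately show thesis
    using that by blast
qed

theorem lemma5p4:
  fixes act :: "'g::topological_group_add \<Rightarrow> 'a::metric_space \<Rightarrow> 'a"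
    and X :: "'a set" and m :: nat and x :: "nat \<Rightarrow> 'a" and U :: "nat \<Rightarrow> 'a set"
  assumes "locally_compact_space (euclidean :: 'g topology)"
    and "compact X"
    and "continuous_action act X"
    and "minimal_action act X"
    and "m \<ge> 2"
    and "x \<in> Q_reg m act X"
    and "\<And>i. i \<in> {1..m} \<Longrightarrow> openin (top_of_set X) (U i) \<and> x i \<in> U i"
  shows "(\<Inter>i\<in>{1..m}. N_set act (U 1) (U i)) \<noteq> {}"
proof -
  have one: "1 \<in> {1..m}"
    using assms(5) by simp
  obtain e where "e > 0" and e: "\<And>z. z \<in> X \<Longrightarrow> \<exists>k. \<forall>y\<in>X. dist z y < e \<longrightarrow> act k y \<in> U 1"
    using minimal_action_Lebesgue_number[OF assms(2-4)] assms(7)[OF one] by blast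
  obtain x' g where x': "\<And>i. i \<in> {1..m} \<Longrightarrow> x' i \<in> U i"
    and close: "\<And>i j. i \<in> {1..m} \<Longrightarrow> j \<in> {1..m} \<Longrightarrow> dist (act g (x' i)) (act g (x' j)) < e"
    using Q_reg_in_neighbourhoods[OF assms(6,7) \<open>e > 0\<close>] by blast
  have x'X: "x' i \<in> X" if "i \<in> {1..m}" for i
    using x'[OF that] assms(7)[OF that] openin_imp_subset by blast
  obtain k where k: "\<And>y. y \<in> X \<Longrightarrow> dist (act g (x' 1)) y < e \<Longrightarrow> act k y \<in> U 1"
    using e continuous_action_closed[OF assms(3) x'X[OF one]] by blast
  have "act (k + g) (x' i) \<in> U 1" if "i \<in> {1..m}" for i
    using k[OF continuous_action_closed[OF assms(3) x'X[OF that]] close[OF one that]]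
    by (simp add: continuous_action_add[OF assms(3) x'X[OF that]])
  then have "k + g \<in> (\<Inter>i\<in>{1..m}. N_set act (U 1) (U i))"
    using x' unfolding N_set_def by blast
  then show ?thesis
    by blast
qed

end
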